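(* Let $S\subset\{0,1\}^N$ with $|S|=K$ and let $1\le m\le K$ be an integer. Then $$\left\|(\ket{\psi_S}\bra{\psi_S})^{\otimes m}-\ket{\psi^{(m)}_{S,{\rm uni}}}\bra{\psi^{(m)}_{S,{\rm uni}}}\right\|_{\rm tr}\le O\!\left(\frac{m}{\sqrt K}\right),$$ i.e. the left side is at most $Cm/\sqrt K$ for a constant $C$ independent of $N,K,m,S$.
   Context: Work on $N$ qubits with computational basis $\{\ket{\mathbf z}:\mathbf z\in\{0,1\}^N\}$. The subset state is $\ket{\psi_S}=|S|^{-1/2}\sum_{\mathbf z\in S}\ket{\mathbf z}$. For a set $S'$ of $m$ distinct basis bitstrings, the unique-type state is $\ket{S'}=(m!)^{-1/2}\sum \ket{\mathbf z_1}\otimes\cdots\otimes\ket{\mathbf z_m}$, the sum running over all $m!$ orderings $(\mathbf z_1,\dots,\mathbf z_m)$ of the elements of $S'$. The pure unique-type state associated with $S$ is $\ket{\psi^{(m)}_{S,{\rm uni}}}=\binom{K}{m}^{-1/2}\sum_{S'\subset S,\,|S'|=m}\ket{S'}$. $\|A\|_{\rm tr}={\rm Tr}\sqrt{A^\dagger A}$. *)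

theory Defs
  imports "HOL-Analysis.Analysis"
begin

(* Operators on the Hilbert space with orthonormal basis indexed by a finite set I are
   represented by their matrices  'i => 'i => complex  (entries outside I are irrelevant,
   required to be 0 where uniqueness matters); kets are functions 'i => complex. *)

definition mmul :: "'i set \<Rightarrow> ('i \<Rightarrow> 'i \<Rightarrow> complex) \<Rightarrow> ('i \<Rightarrow> 'i \<Rightarrow> complex) \<Rightarrow> ('i \<Rightarrow> 'i \<Rightarrow> complex)" where
  "mmul I A B = (\<lambda>i k. \<Sum>j\<in>I. A i j * B j k)"

definition madj :: "('i \<Rightarrow> 'i \<Rightarrow> complex) \<Rightarrow> ('i \<Rightarrow> 'i \<Rightarrow> complex)" where
  "madj A = (\<lambda>i j. cnj (A j i))"

definition mtrace :: "'i set \<Rightarrow> ('i \<Rightarrow> 'i \<Rightarrow> complex) \<Rightarrow> complex" where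
  "mtrace I A = (\<Sum>i\<in>I. A i i)"

definition psd :: "'i set \<Rightarrow> ('i \<Rightarrow> 'i \<Rightarrow> complex) \<Rightarrow> bool" where
  "psd I B = (\<forall>v. (\<Sum>i\<in>I. \<Sum>j\<in>I. cnj (v i) * B i j * v j) \<in> \<real> \<and>
                   0 \<le> Re (\<Sum>i\<in>I. \<Sum>j\<in>I. cnj (v i) * B i j * v j))"

definition msqrt :: "'i set \<Rightarrow> ('i \<Rightarrow> 'i \<Rightarrow> complex) \<Rightarrow> ('i \<Rightarrow> 'i \<Rightarrow> complex)" where
  "msqrt I P = (THE B. psd I B \<and> (\<forall>i j. (i \<notin> I \<or> j \<notin> I) \<longrightarrow> B i j = 0) \<and>
                       (\<forall>i\<in>I. \<forall>j\<in>I. mmul I B B i j = P i j))"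

definition trace_norm :: "'i set \<Rightarrow> ('i \<Rightarrow> 'i \<Rightarrow> complex) \<Rightarrow> real" where
  "trace_norm I A = Re (mtrace I (msqrt I (mmul I (madj A) A)))"

definition ketbra :: "('i \<Rightarrow> complex) \<Rightarrow> ('i \<Rightarrow> complex) \<Rightarrow> ('i \<Rightarrow> 'i \<Rightarrow> complex)" where
  "ketbra a b = (\<lambda>i j. a i * cnj (b j))"

definition bitstrings :: "nat \<Rightarrow> bool list set" where
  "bitstrings N = {z. length z = N}"

(* basis of the m-fold tensor product: m-tuples (lists) of N-bit strings *)
definition tuples :: "nat \<Rightarrow> nat \<Rightarrow> bool list list set" where
  "tuples N m = {zs. length zs = m \<and> (\<forall>z\<in>set zs. z \<in> bitstrings N)}"

definition tensor_pow :: "nat \<Rightarrow> (bool list \<Rightarrow> bool list \<Rightarrow> complex) \<Rightarrow> (bool list list \<Rightarrow> bool list list \<Rightarrow> complex)" where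
  "tensor_pow m A = (\<lambda>zs ws. \<Prod>k<m. A (zs ! k) (ws ! k))"

definition basis_ket :: "bool list list \<Rightarrow> (bool list list \<Rightarrow> complex)" where
  "basis_ket os = (\<lambda>zs. if zs = os then 1 else 0)"

definition subset_state :: "bool list set \<Rightarrow> (bool list \<Rightarrow> complex)" where
  "subset_state S = (\<lambda>z. if z \<in> S then 1 / sqrt (real (card S)) else 0)"

definition unique_type_ket :: "bool list set \<Rightarrow> (bool list list \<Rightarrow> complex)" where
  "unique_type_ket S' = (\<lambda>zs. (1 / sqrt (fact (card S'))) *
      (\<Sum>os\<in>{os. distinct os \<and> set os = S'}. basis_ket os zs))"

definition uni_state :: "bool list set \<Rightarrow> nat \<Rightarrow> (bool list list \<Rightarrow> complex)" where
  "uni_state S m = (\<lambda>zs. (1 / sqrt (real (card S choose m))) *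
      (\<Sum>S'\<in>{S'. S' \<subseteq> S \<and> card S' = m}. unique_type_ket S' zs))"

end

theory Submission
  imports Defs
begin

(* Both states are uniform superpositions of basis tuples. The m-th tensor power of
   |psi_S><psi_S| is |a><a| with a uniform on the K^m tuples over S, and the unique-type
   state b is uniform on the subset D of tuples with distinct entries, |D| = K (K-1) ... (K-m+1).
   Their overlap c = sqrt (|D| / K^m) is real, and for unit vectors with real overlap c the
   operator A = |a><a| - |b><b| satisfies A^dagger A = (1 - c^2) P with P the projection onto
   span {a, b}; its psd square root is sqrt (1 - c^2) P, so the trace norm is 2 sqrt (1 - c^2).
   Finally c^2 >= (1 - m/K)^m >= 1 - m^2/K by Bernoulli's inequality, giving the bound 2 m / sqrt K. *)

definition inprod :: "'i set \<Rightarrow> ('i \<Rightarrow> complex) \<Rightarrow> ('i \<Rightarrow> complex) \<Rightarrow> complex" where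
  "inprod I x y = (\<Sum>i\<in>I. cnj (x i) * y i)"

definition mat_vec :: "'i set \<Rightarrow> ('i \<Rightarrow> 'i \<Rightarrow> complex) \<Rightarrow> ('i \<Rightarrow> complex) \<Rightarrow> ('i \<Rightarrow> complex)" where
  "mat_vec I M x = (\<lambda>i. \<Sum>j\<in>I. M i j * x j)"

lemma mat_vec_mmul: "mat_vec I (mmul I A B) x i = mat_vec I A (mat_vec I B x) i"
proof -
  have "mat_vec I (mmul I A B) x i = (\<Sum>j\<in>I. \<Sum>k\<in>I. A i k * B k j * x j)"
    by (simp add: mat_vec_def mmul_def sum_distrib_right)
  also have "\<dots> = (\<Sum>k\<in>I. \<Sum>j\<in>I. A i k * B k j * x j)" by (rule sum.swap)
  also have "\<dots> = mat_vec I A (mat_vec I B x) i"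
    by (simp add: mat_vec_def sum_distrib_left mult.assoc)
  finally show ?thesis .
qed

lemma mat_vec_cong_mat:
  "(\<And>i j. i \<in> I \<Longrightarrow> j \<in> I \<Longrightarrow> M i j = M' i j) \<Longrightarrow> i \<in> I \<Longrightarrow> mat_vec I M x i = mat_vec I M' x i"
  unfolding mat_vec_def by (auto intro!: sum.cong)

lemma mat_vec_mat_vec:
  assumes "\<And>i j. i \<in> I \<Longrightarrow> j \<in> I \<Longrightarrow> mmul I X Y i j = M i j" "i \<in> I"
  shows "mat_vec I X (mat_vec I Y v) i = mat_vec I M v i"
  using mat_vec_mmul[of I X Y v i] mat_vec_cong_mat[OF assms] by simp

lemma mat_vec_add: "mat_vec I M (\<lambda>i. x i + y i) i = mat_vec I M x i + mat_vec I M y i"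
  unfolding mat_vec_def by (simp add: distrib_left sum.distrib)

lemma mat_vec_diff: "mat_vec I M (\<lambda>i. x i - y i) i = mat_vec I M x i - mat_vec I M y i"
  unfolding mat_vec_def by (simp add: right_diff_distrib sum_subtractf)

lemma mat_vec_scale: "mat_vec I M (\<lambda>i. c * x i) i = c * mat_vec I M x i"
  unfolding mat_vec_def by (simp add: sum_distrib_left algebra_simps)

lemma mat_vec_basis:
  "finite I \<Longrightarrow> j \<in> I \<Longrightarrow> mat_vec I M (\<lambda>k. if k = j then 1 else 0) i = M i j"
  unfolding mat_vec_def by (simp add: if_distrib cong: if_cong)

lemma inprod_self: "inprod I x x = (\<Sum>i\<in>I. (cmod (x i))\<^sup>2)"
  unfolding inprod_def of_real_sum
  by (rule sum.cong) (simp_all add: complex_norm_square[symmetric] mult.commute)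

lemma inprod_self_nonneg: "0 \<le> Re (inprod I x x)"
  by (simp add: inprod_self sum_nonneg)

lemma inprod_self_le_0_imp:
  assumes "finite I" "Re (inprod I x x) \<le> 0" "i \<in> I"
  shows "x i = 0"
proof -
  have "(\<Sum>i\<in>I. (cmod (x i))\<^sup>2) = 0"
    using assms(2) inprod_self_nonneg[of I x] by (simp add: inprod_self)
  then have "(cmod (x i))\<^sup>2 = 0" using assms(1,3) by (simp add: sum_nonneg_eq_0_iff)
  then show ?thesis by simp
qed

lemma inprod_cnj: "inprod I y x = cnj (inprod I x y)"
  unfolding inprod_def by (simp add: mult.commute)

lemma inprod_add_left: "inprod I (\<lambda>i. x i + y i) z = inprod I x z + inprod I y z"
  unfolding inprod_def by (simp add: distrib_right sum.distrib)

lemma inprod_add_right: "inprod I z (\<lambda>i. x i + y i) = inprod I z x + inprod I z y"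
  unfolding inprod_def by (simp add: distrib_left sum.distrib)

lemma inprod_diff_left: "inprod I (\<lambda>i. x i - y i) z = inprod I x z - inprod I y z"
  unfolding inprod_def by (simp add: left_diff_distrib sum_subtractf)

lemma inprod_diff_right: "inprod I z (\<lambda>i. x i - y i) = inprod I z x - inprod I z y"
  unfolding inprod_def by (simp add: right_diff_distrib sum_subtractf)

lemma inprod_scale_left: "inprod I (\<lambda>i. c * x i) z = cnj c * inprod I x z"
  unfolding inprod_def by (simp add: sum_distrib_left algebra_simps)

lemma inprod_scale_right: "inprod I z (\<lambda>i. c * x i) = c * inprod I z x"
  unfolding inprod_def by (simp add: sum_distrib_left algebra_simps)

lemma inprod_cong_right: "(\<And>i. i \<in> I \<Longrightarrow> x i = y i) \<Longrightarrow> inprod I z x = inprod I z y"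
  unfolding inprod_def by (auto intro!: sum.cong)

lemma inprod_basis_left:
  assumes "finite I" "i \<in> I"
  shows "inprod I (\<lambda>k. if k = i then 1 else 0) z = z i"
proof -
  have "inprod I (\<lambda>k. if k = i then 1 else 0) z = (\<Sum>k\<in>I. if k = i then z k else 0)"
    unfolding inprod_def by (rule sum.cong) auto
  then show ?thesis using assms by simp
qed

lemma psd_inprod: "psd I B \<Longrightarrow> inprod I x (mat_vec I B x) \<in> \<real> \<and> 0 \<le> Re (inprod I x (mat_vec I B x))"
  unfolding psd_def inprod_def mat_vec_def by (simp add: sum_distrib_left mult.assoc)

lemma inprod_mat_vec_expand:
  "inprod I (\<lambda>k. x k + c * y k) (mat_vec I B (\<lambda>k. x k + c * y k)) =
   inprod I x (mat_vec I B x) + c * inprod I x (mat_vec I B y)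
   + cnj c * inprod I y (mat_vec I B x) + cnj c * c * inprod I y (mat_vec I B y)"
proof -
  have "mat_vec I B (\<lambda>k. x k + c * y k) = (\<lambda>k. mat_vec I B x k + c * mat_vec I B y k)"
    by (rule ext) (simp add: mat_vec_add mat_vec_scale)
  then show ?thesis
    by (simp add: inprod_add_left inprod_add_right inprod_scale_left inprod_scale_right algebra_simps)
qed

text \<open>Polarisation: a form that is real on \<open>e\<^sub>i\<close>, \<open>e\<^sub>j\<close>, \<open>e\<^sub>i + e\<^sub>j\<close> and \<open>e\<^sub>i + \<i> e\<^sub>j\<close> is Hermitian on that pair.\<close>

lemma psd_hermitian:
  assumes "psd I B" "finite I" "i \<in> I" "j \<in> I"
  shows "B j i = cnj (B i j)"
proof -
  define ei where "ei = (\<lambda>k. if k = i then (1::complex) else 0)"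
  define ej where "ej = (\<lambda>k. if k = j then (1::complex) else 0)"
  have Q: "inprod I ei (mat_vec I B ei) = B i i" "inprod I ei (mat_vec I B ej) = B i j"
          "inprod I ej (mat_vec I B ei) = B j i" "inprod I ej (mat_vec I B ej) = B j j"
    using assms by (simp_all add: ei_def ej_def inprod_basis_left mat_vec_basis)
  have "B i i \<in> \<real>" "B j j \<in> \<real>"
    using psd_inprod[OF assms(1), of ei] psd_inprod[OF assms(1), of ej] Q by auto
  then have diag: "Im (B i i) = 0" "Im (B j j) = 0" by (simp_all add: complex_is_Real_iff)
  have "B i i + B i j + B j i + B j j \<in> \<real>"
    using psd_inprod[OF assms(1), of "\<lambda>k. ei k + 1 * ej k"] unfolding inprod_mat_vec_expand Q by simp
  then have im: "Im (B i j) + Im (B j i) = 0" using diag by (simp add: complex_is_Real_iff)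
  have "B i i + \<i> * B i j - \<i> * B j i + B j j \<in> \<real>"
    using psd_inprod[OF assms(1), of "\<lambda>k. ei k + \<i> * ej k"] unfolding inprod_mat_vec_expand Q by simp
  then have re: "Re (B i j) - Re (B j i) = 0" using diag by (simp add: complex_is_Real_iff)
  show ?thesis using im re by (simp add: complex_eq_iff)
qed

lemma hermitian_inprod_mat_vec:
  assumes "\<And>i j. i \<in> I \<Longrightarrow> j \<in> I \<Longrightarrow> B j i = cnj (B i j)"
  shows "inprod I (mat_vec I B x) y = inprod I x (mat_vec I B y)"
proof -
  have "inprod I (mat_vec I B x) y = (\<Sum>i\<in>I. \<Sum>j\<in>I. cnj (B i j) * cnj (x j) * y i)"
    by (simp add: inprod_def mat_vec_def sum_distrib_right cnj_sum)
  also have "\<dots> = (\<Sum>j\<in>I. \<Sum>i\<in>I. cnj (B i j) * cnj (x j) * y i)" by (rule sum.swap)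
  also have "\<dots> = (\<Sum>j\<in>I. \<Sum>i\<in>I. cnj (x j) * (B j i * y i))"
  proof (intro sum.cong refl)
    fix j i assume "j \<in> I" "i \<in> I"
    then have "cnj (B i j) = B j i" using assms[of i j] by simp
    then show "cnj (B i j) * cnj (x j) * y i = cnj (x j) * (B j i * y i)" by (simp add: mult_ac)
  qed
  also have "\<dots> = inprod I x (mat_vec I B y)"
    by (simp add: inprod_def mat_vec_def sum_distrib_left)
  finally show ?thesis .
qed

lemma psd_square_kernel:
  assumes "finite I" "psd I B" "\<And>i. i \<in> I \<Longrightarrow> mat_vec I B (mat_vec I B w) i = 0" "i \<in> I"
  shows "mat_vec I B w i = 0"
proof -
  let ?y = "mat_vec I B w"
  have "inprod I ?y ?y = inprod I w (mat_vec I B ?y)"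
    by (rule hermitian_inprod_mat_vec, rule psd_hermitian[OF assms(2,1)])
  also have "\<dots> = inprod I w (\<lambda>i. 0)" using assms(3) by (rule inprod_cong_right)
  also have "\<dots> = 0" by (simp add: inprod_def)
  finally show ?thesis using inprod_self_le_0_imp[OF assms(1) _ assms(4), of ?y] by simp
qed

text \<open>A psd \<open>B\<close> has no eigenvalue \<open>-s\<close>, so \<open>B w - s w\<close>, which \<open>B\<close> maps to \<open>-s\<close> times itself, vanishes.\<close>

lemma psd_square_eigen:
  fixes s :: real and w :: "'i \<Rightarrow> complex"
  assumes "finite I" "psd I B" "s > 0"
    and "\<And>i. i \<in> I \<Longrightarrow> mat_vec I B (mat_vec I B w) i = s\<^sup>2 * w i" "i \<in> I"
  shows "mat_vec I B w i = s * w i"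
proof -
  define x where "x = (\<lambda>i. mat_vec I B w i - s * w i)"
  have Bx: "mat_vec I B x i = - s * x i" if "i \<in> I" for i
    using assms(4)[OF that] unfolding x_def mat_vec_diff mat_vec_scale
    by (simp add: power2_eq_square algebra_simps)
  have "inprod I x (mat_vec I B x) = inprod I x (\<lambda>i. - s * x i)"
    by (rule inprod_cong_right) (use Bx in auto)
  also have "\<dots> = - s * inprod I x x" by (rule inprod_scale_right)
  finally have "inprod I x (mat_vec I B x) = - s * inprod I x x" .
  moreover have "0 \<le> Re (inprod I x (mat_vec I B x))" using psd_inprod[OF assms(2)] by blast
  ultimately have "Re (inprod I x x) \<le> 0" using assms(3) by (simp add: mult_le_0_iff)
  then have "x i = 0" using inprod_self_le_0_imp[OF assms(1) _ assms(5)] by blast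
  then show ?thesis by (simp add: x_def)
qed

text \<open>Splitting a basis vector as \<open>P e\<^sub>j + (e\<^sub>j - P e\<^sub>j)\<close>: \<open>B\<close> acts as \<open>s\<close> on the range of \<open>P\<close>
  (by \<open>psd_square_eigen\<close>) and as \<open>0\<close> on its kernel (by \<open>psd_square_kernel\<close>).\<close>

lemma psd_square_root_of_scaled_projection:
  fixes s :: real and P B :: "'i \<Rightarrow> 'i \<Rightarrow> complex"
  assumes fin: "finite I" and s: "0 \<le> s"
    and idem: "\<And>i j. i \<in> I \<Longrightarrow> j \<in> I \<Longrightarrow> mmul I P P i j = P i j"
    and psd: "psd I B" and sq: "\<And>i j. i \<in> I \<Longrightarrow> j \<in> I \<Longrightarrow> mmul I B B i j = s\<^sup>2 * P i j"
    and ij: "i \<in> I" "j \<in> I"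
  shows "B i j = s * P i j"
proof -
  have BB: "mat_vec I B (mat_vec I B v) i = s\<^sup>2 * mat_vec I P v i" if "i \<in> I" for v i
  proof -
    have "mat_vec I B (mat_vec I B v) i = mat_vec I (\<lambda>i j. s\<^sup>2 * P i j) v i"
      by (rule mat_vec_mat_vec) (use sq that in auto)
    also have "\<dots> = s\<^sup>2 * mat_vec I P v i" by (simp add: mat_vec_def sum_distrib_left mult.assoc)
    finally show ?thesis .
  qed
  have PP: "mat_vec I P (mat_vec I P v) i = mat_vec I P v i" if "i \<in> I" for v i
    by (rule mat_vec_mat_vec[OF idem that])
  define v where "v = (\<lambda>k. if k = j then (1::complex) else 0)"
  define p where "p = mat_vec I P v"
  define q where "q = (\<lambda>k. v k - p k)"
  have Pp: "mat_vec I P p i = p i" if "i \<in> I" for i using PP[OF that] by (simp add: p_def)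
  have Pq: "mat_vec I P q i = 0" if "i \<in> I" for i
    using Pp[OF that] by (simp add: q_def mat_vec_diff p_def)
  have Bq: "mat_vec I B q i = 0" if "i \<in> I" for i
    by (rule psd_square_kernel[OF fin psd _ that]) (simp add: BB Pq)
  have Bp: "mat_vec I B p i = s * p i" if "i \<in> I" for i
  proof (cases "s = 0")
    case True
    then show ?thesis by (simp, intro psd_square_kernel[OF fin psd _ that]) (simp add: BB)
  next
    case False
    then show ?thesis
      by (intro psd_square_eigen[OF fin psd _ _ that]) (use s in \<open>simp_all add: BB Pp\<close>)
  qed
  have "v = (\<lambda>k. p k + q k)" by (simp add: q_def)
  then have "mat_vec I B v i = mat_vec I B p i + mat_vec I B q i" by (simp add: mat_vec_add)
  moreover have "B i j = mat_vec I B v i" using ij fin by (simp add: v_def mat_vec_basis)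
  moreover have "p i = P i j" using ij fin by (simp add: p_def v_def mat_vec_basis)
  ultimately show ?thesis using Bp Bq ij by simp
qed

lemma msqrt_eqI:
  assumes "psd I B0" "\<And>i j. i \<notin> I \<or> j \<notin> I \<Longrightarrow> B0 i j = 0"
    "\<And>i j. i \<in> I \<Longrightarrow> j \<in> I \<Longrightarrow> mmul I B0 B0 i j = P i j"
    and unique: "\<And>B i j. psd I B \<Longrightarrow> (\<And>i j. i \<in> I \<Longrightarrow> j \<in> I \<Longrightarrow> mmul I B B i j = P i j) \<Longrightarrow>
        i \<in> I \<Longrightarrow> j \<in> I \<Longrightarrow> B i j = B0 i j"
  shows "msqrt I P = B0"
  unfolding msqrt_def
proof (rule the_equality)
  show "psd I B0 \<and> (\<forall>i j. i \<notin> I \<or> j \<notin> I \<longrightarrow> B0 i j = 0) \<and> (\<forall>i\<in>I. \<forall>j\<in>I. mmul I B0 B0 i j = P i j)"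
    using assms(1-3) by blast
next
  fix B
  assume B: "psd I B \<and> (\<forall>i j. i \<notin> I \<or> j \<notin> I \<longrightarrow> B i j = 0) \<and> (\<forall>i\<in>I. \<forall>j\<in>I. mmul I B B i j = P i j)"
  show "B = B0"
  proof (intro ext)
    fix i j show "B i j = B0 i j"
      using B assms(2) unique[of B i j] by (cases "i \<in> I \<and> j \<in> I") auto
  qed
qed

lemma msqrt_cong:
  assumes "\<And>i j. i \<in> I \<Longrightarrow> j \<in> I \<Longrightarrow> P i j = P' i j"
  shows "msqrt I P = msqrt I P'"
proof -
  have "(\<forall>i\<in>I. \<forall>j\<in>I. mmul I B B i j = P i j) \<longleftrightarrow> (\<forall>i\<in>I. \<forall>j\<in>I. mmul I B B i j = P' i j)"
    for B using assms by (simp cong: ball_cong)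
  then show ?thesis unfolding msqrt_def by simp
qed

lemma trace_norm_cong:
  assumes "\<And>i j. i \<in> I \<Longrightarrow> j \<in> I \<Longrightarrow> A i j = A' i j"
  shows "trace_norm I A = trace_norm I A'"
proof -
  have "msqrt I (mmul I (madj A) A) = msqrt I (mmul I (madj A') A')"
    by (rule msqrt_cong) (simp add: mmul_def madj_def assms)
  then show ?thesis by (simp add: trace_norm_def)
qed

lemma psd_ketbra_self: "psd I (ketbra a a)"
proof -
  have "(\<Sum>i\<in>I. \<Sum>j\<in>I. cnj (v i) * ketbra a a i j * v j) = cnj (inprod I a v) * inprod I a v" for v
    by (simp add: ketbra_def inprod_def sum_product cnj_sum mult_ac)
  then show ?thesis unfolding psd_def by (simp add: complex_norm_square[symmetric] mult.commute)
qed

lemma psd_add: "psd I A \<Longrightarrow> psd I B \<Longrightarrow> psd I (\<lambda>i j. A i j + B i j)"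
  unfolding psd_def by (simp add: distrib_left distrib_right sum.distrib)

lemma psd_restrict_scale:
  fixes s :: real and P :: "'i \<Rightarrow> 'i \<Rightarrow> complex"
  assumes "psd I P" "0 \<le> s"
  shows "psd I (\<lambda>i j. if i \<in> I \<and> j \<in> I then s * P i j else 0)"
proof -
  have "(\<Sum>i\<in>I. \<Sum>j\<in>I. cnj (v i) * (if i \<in> I \<and> j \<in> I then s * P i j else 0) * v j)
      = s * (\<Sum>i\<in>I. \<Sum>j\<in>I. cnj (v i) * P i j * v j)" for v
    by (simp add: sum_distrib_left mult_ac)
  then show ?thesis using assms unfolding psd_def by simp
qed

lemma mmul_ketbra: "mmul I (ketbra x y) (ketbra z w) i k = x i * inprod I y z * cnj (w k)"
  by (simp add: mmul_def ketbra_def inprod_def sum_distrib_left sum_distrib_right mult_ac)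

lemma mtrace_ketbra: "mtrace I (ketbra x y) = inprod I y x"
  by (simp add: mtrace_def ketbra_def inprod_def mult.commute)

lemma mtrace_add: "mtrace I (\<lambda>i j. A i j + B i j) = mtrace I A + mtrace I B"
  by (simp add: mtrace_def sum.distrib)

lemma mmul_orthonormal_projection:
  assumes aa: "inprod I a a = 1" and au: "inprod I a u = 0" and uu: "inprod I u u = 1"
  defines "P \<equiv> \<lambda>i j. ketbra a a i j + ketbra u u i j"
  shows "mmul I P P i k = P i k"
proof -
  have ua: "inprod I u a = 0" using au inprod_cnj[of I u a] by simp
  have "mmul I P P i k = mmul I (ketbra a a) (ketbra a a) i k + mmul I (ketbra a a) (ketbra u u) i k
      + mmul I (ketbra u u) (ketbra a a) i k + mmul I (ketbra u u) (ketbra u u) i k"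
    by (simp add: P_def mmul_def distrib_left distrib_right sum.distrib)
  then show ?thesis unfolding mmul_ketbra aa au ua uu by (simp add: P_def ketbra_def)
qed

lemma trace_norm_eq_of_scaled_projection:
  fixes s :: real and P :: "'i \<Rightarrow> 'i \<Rightarrow> complex"
  assumes fin: "finite I" and s: "0 \<le> s" and psd: "psd I P"
    and idem: "\<And>i j. i \<in> I \<Longrightarrow> j \<in> I \<Longrightarrow> mmul I P P i j = P i j"
    and sq: "\<And>i j. i \<in> I \<Longrightarrow> j \<in> I \<Longrightarrow> mmul I (madj A) A i j = s\<^sup>2 * P i j"
  shows "trace_norm I A = s * Re (mtrace I P)"
proof -
  define B0 where "B0 = (\<lambda>i j. if i \<in> I \<and> j \<in> I then s * P i j else 0)"
  have B0_sq: "mmul I B0 B0 i j = s\<^sup>2 * P i j" if "i \<in> I" "j \<in> I" for i j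
  proof -
    have "mmul I B0 B0 i j = s\<^sup>2 * mmul I P P i j"
      using that by (simp add: mmul_def B0_def sum_distrib_left power2_eq_square mult_ac)
    then show ?thesis using idem that by simp
  qed
  have "msqrt I (mmul I (madj A) A) = B0"
  proof (rule msqrt_eqI)
    show "psd I B0" unfolding B0_def by (rule psd_restrict_scale[OF psd s])
    show "B0 i j = 0" if "i \<notin> I \<or> j \<notin> I" for i j using that by (auto simp: B0_def)
    show "mmul I B0 B0 i j = mmul I (madj A) A i j" if "i \<in> I" "j \<in> I" for i j
      using B0_sq sq that by simp
    show "B i j = B0 i j"
      if "psd I B" "\<And>i j. i \<in> I \<Longrightarrow> j \<in> I \<Longrightarrow> mmul I B B i j = mmul I (madj A) A i j" "i \<in> I" "j \<in> I"
      for B i j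
      using psd_square_root_of_scaled_projection[OF fin s idem that(1) _ that(3,4)] that sq
      by (simp add: B0_def)
  qed
  moreover have "mtrace I B0 = s * mtrace I P" by (simp add: mtrace_def B0_def sum_distrib_left)
  ultimately show ?thesis by (simp add: trace_norm_def)
qed

lemma adj_mult_ketbra_diff:
  fixes c :: real
  assumes aa: "inprod I a a = 1" and bb: "inprod I b b = 1" and ab: "inprod I a b = c"
  defines "A \<equiv> \<lambda>i j. ketbra a a i j - ketbra b b i j"
  shows "mmul I (madj A) A i k = ketbra a a i k + ketbra b b i k - c * (ketbra a b i k + ketbra b a i k)"
proof -
  have ba: "inprod I b a = c" using ab inprod_cnj[of I b a] by simp
  have "madj A = A" by (intro ext) (simp add: madj_def A_def ketbra_def)
  moreover have "mmul I A A i k = mmul I (ketbra a a) (ketbra a a) i k - mmul I (ketbra a a) (ketbra b b) i k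
      - mmul I (ketbra b b) (ketbra a a) i k + mmul I (ketbra b b) (ketbra b b) i k"
    by (simp add: A_def mmul_def left_diff_distrib right_diff_distrib sum_subtractf sum.distrib)
  ultimately show ?thesis unfolding mmul_ketbra aa bb ab ba by (simp add: ketbra_def algebra_simps)
qed

text \<open>With \<open>d = b - c a\<close> and \<open>s = \<Parallel>d\<Parallel> = \<surd>(1 - c\<^sup>2)\<close>, one has \<open>A\<^sup>\<dagger> A = s\<^sup>2 |a\<rangle>\<langle>a| + |d\<rangle>\<langle>d|\<close>, which is
  \<open>s\<^sup>2\<close> times the projection onto \<open>span {a, d}\<close> (or \<open>0\<close> when \<open>d = 0\<close>).\<close>

lemma trace_norm_pure_state_diff:
  fixes c :: real
  assumes fin: "finite I" and aa: "inprod I a a = 1" and bb: "inprod I b b = 1"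
    and ab: "inprod I a b = c"
  shows "trace_norm I (\<lambda>i j. ketbra a a i j - ketbra b b i j) = 2 * sqrt (1 - c\<^sup>2)"
proof -
  define A where "A = (\<lambda>i j. ketbra a a i j - ketbra b b i j)"
  define d where "d = (\<lambda>k. b k - c * a k)"
  have ba: "inprod I b a = c" using ab inprod_cnj[of I b a] by simp
  have dd: "inprod I d d = complex_of_real (1 - c\<^sup>2)"
    unfolding d_def inprod_diff_left inprod_diff_right inprod_scale_left inprod_scale_right aa ab ba bb
    by (simp add: power2_eq_square)
  have c1: "c\<^sup>2 \<le> 1" using inprod_self_nonneg[of I d] dd by simp
  define s where "s = sqrt (1 - c\<^sup>2)"
  have s: "0 \<le> s" "s\<^sup>2 = 1 - c\<^sup>2" using c1 by (simp_all add: s_def)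
  have s2c: "complex_of_real (s\<^sup>2) = 1 - (complex_of_real c)\<^sup>2" by (simp add: s(2))
  have AA: "mmul I (madj A) A i k = s\<^sup>2 * ketbra a a i k + ketbra d d i k" for i k
    unfolding A_def adj_mult_ketbra_diff[OF aa bb ab] s2c
    by (simp add: ketbra_def d_def algebra_simps power2_eq_square)
  show ?thesis
  proof (cases "s = 0")
    case True
    then have "Re (inprod I d d) \<le> 0" using dd s(2) by simp
    then have "d k = 0" if "k \<in> I" for k using inprod_self_le_0_imp[OF fin _ that] by blast
    moreover have "mmul I (ketbra a a) (ketbra a a) i k = ketbra a a i k" for i k
      unfolding mmul_ketbra aa by (simp add: ketbra_def)
    ultimately have "trace_norm I A = 0 * Re (mtrace I (ketbra a a))"
      by (intro trace_norm_eq_of_scaled_projection[OF fin _ psd_ketbra_self])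
         (simp_all add: AA True ketbra_def)
    then show ?thesis using True by (simp add: A_def s_def)
  next
    case False
    define u where "u = (\<lambda>k. complex_of_real (1 / s) * d k)"
    have du: "d k = s * u k" for k using False by (simp add: u_def)
    have au: "inprod I a u = 0"
      unfolding u_def d_def inprod_scale_right inprod_diff_right ab aa by simp
    have "inprod I u u = complex_of_real ((1 / s) * (1 / s) * (1 - c\<^sup>2))"
      unfolding u_def inprod_scale_left inprod_scale_right dd by simp
    also have "\<dots> = 1" using False by (simp only: s(2)[symmetric]) (simp add: power2_eq_square)
    finally have uu: "inprod I u u = 1" .
    define P where "P = (\<lambda>i j. ketbra a a i j + ketbra u u i j)"
    have AA': "mmul I (madj A) A i k = s\<^sup>2 * P i k" for i k
      unfolding AA du P_def ketbra_def by (simp add: power2_eq_square algebra_simps)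
    have P_psd: "psd I P" unfolding P_def by (rule psd_add[OF psd_ketbra_self psd_ketbra_self])
    have P_idem: "mmul I P P i k = P i k" for i k
      unfolding P_def by (rule mmul_orthonormal_projection[OF aa au uu])
    have "trace_norm I A = s * Re (mtrace I P)"
      by (rule trace_norm_eq_of_scaled_projection[OF fin s(1) P_psd P_idem AA'])
    then show ?thesis by (simp add: P_def mtrace_add mtrace_ketbra aa uu A_def s_def)
  qed
qed

definition uniform_ket :: "'i set \<Rightarrow> 'i \<Rightarrow> complex" where
  "uniform_ket X = (\<lambda>i. if i \<in> X then complex_of_real (1 / sqrt (real (card X))) else 0)"

lemma inprod_uniform_ket:
  assumes "finite I" "A \<subseteq> I" "D \<subseteq> A"
  shows "inprod I (uniform_ket A) (uniform_ket D) = sqrt (card D / card A)"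
proof -
  define r where "r = 1 / (sqrt (card A) * sqrt (card D))"
  have "inprod I (uniform_ket A) (uniform_ket D) = (\<Sum>i\<in>I. if i \<in> D then complex_of_real r else 0)"
    unfolding inprod_def by (rule sum.cong) (use assms in \<open>auto simp: uniform_ket_def r_def\<close>)
  also have "\<dots> = of_nat (card D) * complex_of_real r"
    using assms by (simp add: sum.If_cases Int_absorb1)
  also have "\<dots> = sqrt (card D / card A)"
  proof (cases "card D = 0")
    case False
    have "real (card D) * r = (real (card D) / sqrt (card D)) / sqrt (card A)"
      by (simp add: r_def divide_divide_eq_left mult.commute)
    also have "\<dots> = sqrt (card D) / sqrt (card A)" by (simp add: real_div_sqrt)
    finally have "real (card D) * r = sqrt (card D) / sqrt (card A)" .
    then show ?thesis by (metis of_real_mult of_real_of_nat_eq real_sqrt_divide)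
  qed simp
  finally show ?thesis .
qed

lemma trace_norm_uniform_ket_diff:
  assumes "finite I" "A \<subseteq> I" "D \<subseteq> A" "D \<noteq> {}"
  shows "trace_norm I (\<lambda>i j. ketbra (uniform_ket A) (uniform_ket A) i j
                           - ketbra (uniform_ket D) (uniform_ket D) i j)
       = 2 * sqrt (1 - card D / card A)"
proof -
  have "finite A" using assms(1,2) finite_subset by blast
  then have "finite D" using assms(3) finite_subset by blast
  then have "card D \<noteq> 0" "card A \<noteq> 0" using \<open>finite A\<close> assms(3,4) by auto
  have "trace_norm I (\<lambda>i j. ketbra (uniform_ket A) (uniform_ket A) i j
                          - ketbra (uniform_ket D) (uniform_ket D) i j)
      = 2 * sqrt (1 - (sqrt (card D / card A))\<^sup>2)"
    by (rule trace_norm_pure_state_diff)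
       (use assms \<open>card D \<noteq> 0\<close> \<open>card A \<noteq> 0\<close> in \<open>simp_all add: inprod_uniform_ket\<close>)
  then show ?thesis by simp
qed

lemma finite_tuples: "finite (tuples N m)"
proof -
  have "bitstrings N = {xs. set xs \<subseteq> UNIV \<and> length xs = N}" by (simp add: bitstrings_def)
  then have "finite (bitstrings N)" using finite_lists_length_eq[of "UNIV :: bool set" N] by simp
  moreover have "tuples N m = {zs. set zs \<subseteq> bitstrings N \<and> length zs = m}" by (auto simp: tuples_def)
  ultimately show ?thesis by (simp add: finite_lists_length_eq)
qed

lemma tensor_pow_ketbra:
  "tensor_pow m (ketbra x y) = ketbra (\<lambda>zs. \<Prod>k<m. x (zs ! k)) (\<lambda>zs. \<Prod>k<m. y (zs ! k))"
  by (simp add: tensor_pow_def ketbra_def prod.distrib fun_eq_iff)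

lemma prod_uniform_ket_nth:
  assumes "finite S" "length zs = m"
  shows "(\<Prod>k<m. uniform_ket S (zs ! k)) = uniform_ket {xs. set xs \<subseteq> S \<and> length xs = m} zs"
proof (cases "set zs \<subseteq> S")
  case True
  then have "zs ! k \<in> S" if "k < m" for k using assms(2) that nth_mem by blast
  then have "(\<Prod>k<m. uniform_ket S (zs ! k)) = (\<Prod>k<m. complex_of_real (1 / sqrt (real (card S))))"
    by (intro prod.cong) (auto simp: uniform_ket_def)
  also have "\<dots> = complex_of_real (1 / sqrt (real (card S ^ m)))"
    by (simp add: real_sqrt_power power_divide)
  moreover have "zs \<in> {xs. set xs \<subseteq> S \<and> length xs = m}" using True assms(2) by simp
  ultimately show ?thesis by (simp add: uniform_ket_def card_lists_length_eq[OF assms(1)])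
next
  case False
  then obtain x where "x \<in> set zs" "x \<notin> S" by blast
  then obtain k where "k < m" "zs ! k \<notin> S" using assms(2) by (metis in_set_conv_nth)
  then show ?thesis using False by (auto simp: uniform_ket_def intro: prod_zero)
qed

lemma card_distinct_lists_eq_binomial:
  assumes "finite S" "m \<le> card S"
  shows "card {xs. length xs = m \<and> distinct xs \<and> set xs \<subseteq> S} = (card S choose m) * fact m"
proof -
  let ?K = "card S"
  have "fact ?K = fact (?K - m) * \<Prod>{?K - m + 1 .. ?K}"
    using fact_eq_fact_times[of "?K - m" ?K] by simp
  moreover have "fact ?K = fact (?K - m) * ((?K choose m) * fact m)"
    using binomial_fact_lemma[OF assms(2)] by (simp add: mult_ac)
  ultimately have "\<Prod>{?K - m + 1 .. ?K} = (?K choose m) * fact m" by simp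
  then show ?thesis by (simp add: card_lists_distinct_length_eq[OF assms])
qed

lemma unique_type_ket_eq:
  assumes "finite S'"
  shows "unique_type_ket S' zs =
    (if distinct zs \<and> set zs = S' then complex_of_real (1 / sqrt (fact (card S'))) else 0)"
proof -
  define X where "X = {os. distinct os \<and> set os = S'}"
  have "finite X" by (rule finite_subset[OF _ finite_subset_distinct[OF assms]]) (auto simp: X_def)
  then have "(\<Sum>os\<in>X. basis_ket os zs) = (if zs \<in> X then 1 else 0)" by (simp add: basis_ket_def)
  then have "unique_type_ket S' zs = complex_of_real (1 / sqrt (fact (card S'))) * (if zs \<in> X then 1 else 0)"
    unfolding unique_type_ket_def X_def[symmetric] by (rule arg_cong)
  then show ?thesis by (simp add: X_def)
qed

lemma uni_state_eq_uniform_ket: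
  assumes "finite S" "m \<le> card S"
  shows "uni_state S m = uniform_ket {xs. length xs = m \<and> distinct xs \<and> set xs \<subseteq> S}"
proof
  fix zs
  define Sets where "Sets = {S'. S' \<subseteq> S \<and> card S' = m}"
  have "finite Sets" unfolding Sets_def using assms(1) by (auto intro: finite_subset[of _ "Pow S"])
  have "uni_state S m zs = complex_of_real (1 / sqrt (real (card S choose m))) *
      (\<Sum>S'\<in>Sets. if S' = set zs then (if distinct zs then complex_of_real (1 / sqrt (fact m)) else 0) else 0)"
    unfolding uni_state_def Sets_def[symmetric]
    by (intro arg_cong2[where f="(*)"] refl sum.cong)
       (auto simp: Sets_def unique_type_ket_eq[OF finite_subset[OF _ assms(1)]])
  also have "\<dots> = (if set zs \<in> Sets \<and> distinct zs
      then complex_of_real (1 / sqrt (real (card S choose m) * fact m)) else 0)"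
    using \<open>finite Sets\<close> by (simp add: real_sqrt_mult)
  also have "\<dots> = uniform_ket {xs. length xs = m \<and> distinct xs \<and> set xs \<subseteq> S} zs"
    by (auto simp: uniform_ket_def card_distinct_lists_eq_binomial[OF assms] Sets_def distinct_card)
  finally show "uni_state S m zs = uniform_ket {xs. length xs = m \<and> distinct xs \<and> set xs \<subseteq> S} zs" .
qed

text \<open>Bernoulli's inequality applied to the lower bound \<open>(K - m)\<^sup>m\<close> of the falling factorial.\<close>

lemma falling_factorial_ratio_ge:
  fixes K m :: nat
  assumes "0 < K" "m \<le> K"
  shows "1 - real m ^ 2 / real K \<le> real (\<Prod>{K - m + 1 .. K}) / real K ^ m"
proof -
  have "\<Prod>{K - m + 1 .. K} = (\<Prod>i<m. K - i)"
    by (rule prod.reindex_bij_witness[of _ "\<lambda>i. K - i" "\<lambda>i. K - i"]) (use assms in auto)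
  moreover have "real (K - m) ^ m \<le> (\<Prod>i<m. real (K - i))"
    using prod_mono[of "{..<m}" "\<lambda>_. real (K - m)" "\<lambda>i. real (K - i)"] by simp
  ultimately have falling: "real (K - m) ^ m \<le> real (\<Prod>{K - m + 1 .. K})" by simp
  have "1 - real m ^ 2 / real K = 1 + real m * (- (real m / real K))"
    by (simp add: power2_eq_square)
  also have "\<dots> \<le> (1 + (- (real m / real K))) ^ m"
    by (rule Bernoulli_inequality) (use assms in simp)
  also have "\<dots> = real (K - m) ^ m / real K ^ m"
    using assms by (simp add: of_nat_diff field_simps power_divide)
  also have "\<dots> \<le> real (\<Prod>{K - m + 1 .. K}) / real K ^ m"
    using falling by (simp add: divide_right_mono)
  finally show ?thesis .
qed

lemma trace_norm_product_minus_uni_state: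
  assumes S: "S \<subseteq> bitstrings N" and fin: "finite S" and m: "m \<le> card S"
  shows "trace_norm (tuples N m)
       (\<lambda>zs ws. tensor_pow m (ketbra (subset_state S) (subset_state S)) zs ws
                - ketbra (uni_state S m) (uni_state S m) zs ws)
     = 2 * sqrt (1 - real (\<Prod>{card S - m + 1 .. card S}) / real (card S) ^ m)"
proof -
  define A where "A = {xs. set xs \<subseteq> S \<and> length xs = m}"
  define D where "D = {xs. length xs = m \<and> distinct xs \<and> set xs \<subseteq> S}"
  have "A \<subseteq> tuples N m" "D \<subseteq> A" using S by (auto simp: A_def D_def tuples_def)
  have card_A: "card A = card S ^ m" unfolding A_def by (rule card_lists_length_eq[OF fin])
  have card_D: "card D = \<Prod>{card S - m + 1 .. card S}"
    unfolding D_def by (rule card_lists_distinct_length_eq[OF fin m])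
  then have "D \<noteq> {}" by auto
  have "subset_state S = uniform_ket S" by (simp add: fun_eq_iff subset_state_def uniform_ket_def)
  then have prod_A: "(\<Prod>k<m. subset_state S (zs ! k)) = uniform_ket A zs" if "zs \<in> tuples N m" for zs
    using that by (simp add: prod_uniform_ket_nth[OF fin] A_def tuples_def)
  have "tensor_pow m (ketbra (subset_state S) (subset_state S)) zs ws
      = ketbra (uniform_ket A) (uniform_ket A) zs ws" if "zs \<in> tuples N m" "ws \<in> tuples N m" for zs ws
    by (simp only: tensor_pow_ketbra) (simp only: ketbra_def prod_A[OF that(1)] prod_A[OF that(2)])
  moreover have "uni_state S m = uniform_ket D"
    unfolding D_def by (rule uni_state_eq_uniform_ket[OF fin m])
  ultimately have "trace_norm (tuples N m)
       (\<lambda>zs ws. tensor_pow m (ketbra (subset_state S) (subset_state S)) zs ws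
                - ketbra (uni_state S m) (uni_state S m) zs ws)
      = trace_norm (tuples N m) (\<lambda>i j. ketbra (uniform_ket A) (uniform_ket A) i j
                                     - ketbra (uniform_ket D) (uniform_ket D) i j)"
    by (intro trace_norm_cong) simp
  also have "\<dots> = 2 * sqrt (1 - card D / card A)"
    by (rule trace_norm_uniform_ket_diff[OF finite_tuples]) fact+
  finally show ?thesis by (simp add: card_A card_D)
qed

theorem lemma1:
  shows "\<exists>C::real. \<forall>(N::nat) (S::bool list set) (K::nat) (m::nat).
     S \<subseteq> bitstrings N \<longrightarrow> card S = K \<longrightarrow> 1 \<le> m \<longrightarrow> m \<le> K \<longrightarrow>
     trace_norm (tuples N m)
       (\<lambda>zs ws. tensor_pow m (ketbra (subset_state S) (subset_state S)) zs ws
                - ketbra (uni_state S m) (uni_state S m) zs ws)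
     \<le> C * real m / sqrt (real K)"
proof (intro exI[of _ 2] allI impI)
  fix N :: nat and S :: "bool list set" and K m :: nat
  assume S: "S \<subseteq> bitstrings N" and K: "card S = K" and m: "1 \<le> m" "m \<le> K"
  have "finite S" using K m card.infinite by force
  have "trace_norm (tuples N m)
       (\<lambda>zs ws. tensor_pow m (ketbra (subset_state S) (subset_state S)) zs ws
                - ketbra (uni_state S m) (uni_state S m) zs ws)
      = 2 * sqrt (1 - real (\<Prod>{K - m + 1 .. K}) / real K ^ m)"
    using trace_norm_product_minus_uni_state[OF S \<open>finite S\<close>] K m by simp
  also have "\<dots> \<le> 2 * sqrt (real m ^ 2 / real K)"
    using falling_factorial_ratio_ge[of K m] m by simp
  also have "\<dots> = 2 * real m / sqrt (real K)" by (simp add: real_sqrt_divide)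
  finally show "trace_norm (tuples N m)
       (\<lambda>zs ws. tensor_pow m (ketbra (subset_state S) (subset_state S)) zs ws
                - ketbra (uni_state S m) (uni_state S m) zs ws)
     \<le> 2 * real m / sqrt (real K)" .
qed

end
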